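(* Let $\mathfrak A$ be a commutative ring and let $(a_i),(a^*_i),(b_i),(b^*_i)$, $i\in\mathbb Z$, be sequences in $\mathfrak A$ with $a_0=a^*_0=b_0=b^*_0=1$ and $a_i=a^*_i=b_i=b^*_i=0$ for $i<0$, such that $\big(\sum_{i\ge0}a_it^i\big)\big(\sum_{i\ge0}b_it^i\big)=1$ and $\big(\sum_{i\ge0}a^*_it^i\big)\big(\sum_{i\ge0}b^*_it^i\big)=1$ as formal power series. Let $\nu,\mu$ be partitions, $q=\ell(\nu)$, $p=\ell(\mu)$, $s=\ell(\nu')$, $r=\ell(\mu')$ ($'$ denoting conjugation). Let $A$ be the $(p+q)\times(p+q)$ matrix with $A_{ij}=a^*_{\nu_{q+1-i}+i-j}$ for $1\le i\le q$ and $A_{q+i,j}=a_{\mu_i-q-i+j}$ for $1\le i\le p$, and $B$ the $(r+s)\times(r+s)$ matrix with $B_{ij}=b^*_{\nu'_{s+1-i}+i-j}$ for $1\le i\le s$ and $B_{s+i,j}=b_{\mu'_i-s-i+j}$ for $1\le i\le r$. Then $\det A=(-1)^{|\nu|+|\mu|}\det B$.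
   Context: $\ell(\lambda)$ is the number of nonzero parts of a partition $\lambda$ and $|\lambda|$ its size. Explicitly, the rows of $A$ are $(a^*_{\nu_q},a^*_{\nu_q-1},\dots,a^*_{\nu_q-q-p+1}),\dots,(a^*_{\nu_1+q-1},\dots,a^*_{\nu_1-p}),(a_{\mu_1-q},\dots,a_{\mu_1+p-1}),\dots,(a_{\mu_p-q-p+1},\dots,a_{\mu_p})$, and $B$ is analogous with $b^*,b,\nu',\mu',s,r$. *)

theory Defs
  imports "Jordan_Normal_Form.Determinant" "HOL-Computational_Algebra.Formal_Power_Series"
begin

text \<open>Partitions are represented as weakly decreasing lists of positive naturals
  (the nonzero parts). The i-th part (1-indexed) is the list entry at index i-1.\<close>

definition is_partition :: "nat list \<Rightarrow> bool" where
  "is_partition lam \<longleftrightarrow> sorted_wrt (\<ge>) lam \<and> 0 \<notin> set lam"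

definition part_len :: "nat list \<Rightarrow> nat" where
  "part_len lam = length lam"

definition part_size :: "nat list \<Rightarrow> nat" where
  "part_size lam = sum_list lam"

definition conj_part :: "nat list \<Rightarrow> nat list" where
  "conj_part lam = map (\<lambda>j. length (filter (\<lambda>x. j \<le> x) lam))
                       [1..<Suc (if lam = [] then 0 else Max (set lam))]"

definition gen_fps :: "(int \<Rightarrow> 'a::comm_ring_1) \<Rightarrow> 'a fps" where
  "gen_fps c = Abs_fps (\<lambda>n. c (int n))"

text \<open>The matrix A (0-indexed entries): rows 1..q use the star sequence and
  \<nu>_{q+1-i}, rows q+1..q+p use the plain sequence and \<mu>_i.\<close>
definition jt_matrix :: "(int \<Rightarrow> 'a::comm_ring_1) \<Rightarrow> (int \<Rightarrow> 'a) \<Rightarrow> nat list \<Rightarrow> nat list \<Rightarrow> 'a mat" where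
  "jt_matrix ast a \<nu> \<mu> =
     (let q = part_len \<nu>; p = part_len \<mu> in
      mat (p + q) (p + q) (\<lambda>(i, j).
        if i < q then ast (int (\<nu> ! (q - 1 - i)) + int i - int j)
        else a (int (\<mu> ! (i - q)) - int i + int j)))"

end

theory Submission
  imports Defs "HOL-Library.More_List"
begin

text \<open>Pad \<open>\<nu>\<close> with zeros to \<open>Q = \<ell>(\<nu>) + \<ell>(\<mu>')\<close> parts. Right multiplication by the unitriangular
  Toeplitz matrix \<open>(b (j - i))\<close> turns the rows of the first matrix built from \<open>a\<close> into unit vectors,
  because \<open>a b = 1\<close>; they sit in the columns \<open>Q + i - \<mu>\<^sub>i\<close>. A Laplace expansion along them leaves,
  up to the sign \<open>(-1)\<^bsup>|\<mu>|\<^esup>\<close>, the \<open>Q \<times> Q\<close> minor of the remaining rows, which are rows of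
  \<open>T\<^sub>a\<^sub>* T\<^sub>b\<^sup>T\<close>, on the complementary columns; by Macdonald's complementarity lemma these are the
  columns \<open>\<mu>'\<^bsub>Q-1-j\<^esub> + j\<close>. Reversing the order of rows and columns turns the second matrix into
  one of the same shape for \<open>b, b\<^sup>*, \<mu>', \<nu>'\<close>, with \<open>\<nu>\<close> in the role of the conjugate of \<open>\<nu>'\<close>, and the
  same reduction yields the transpose of the same minor with sign \<open>(-1)\<^bsup>|\<nu>'|\<^esup> = (-1)\<^bsup>|\<nu>|\<^esup>\<close>.\<close>

section \<open>Determinants\<close>

lemma det_mat_transpose:
  "det (mat n n (\<lambda>(i,j). f j i)) = det (mat n n (\<lambda>(i,j). f i j))"
proof -
  have "mat n n (\<lambda>(i,j). f j i) = transpose_mat (mat n n (\<lambda>(i,j). f i j))"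
    by (intro eq_matI) auto
  then show ?thesis
    using det_transpose[of "mat n n (\<lambda>(i,j). f i j)" n] by simp
qed

lemma det_mat_reverse:
  fixes f :: "nat \<Rightarrow> nat \<Rightarrow> 'a::comm_ring_1"
  shows "det (mat n n (\<lambda>(i,j). f (n-1-i) (n-1-j))) = det (mat n n (\<lambda>(i,j). f i j))"
proof -
  define rev where "rev i = (if i < n then n - 1 - i else i)" for i
  have rev: "rev permutes {0..<n}"
    by (rule bij_imp_permutes) (auto simp: rev_def intro!: bij_betw_byWitness[where f'=rev])
  have reverse_rows:
    "det (mat n n (\<lambda>(i,j). g (n-1-i) j)) = signof rev * det (mat n n (\<lambda>(i,j). g i j))"
    for g :: "nat \<Rightarrow> nat \<Rightarrow> 'a"
  proof -
    have "mat n n (\<lambda>(i,j). g (n-1-i) j) = mat n n (\<lambda>(i,j). mat n n (\<lambda>(i,j). g i j) $$ (rev i, j))"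
      by (intro eq_matI) (auto simp: rev_def)
    then show ?thesis
      using det_permute_rows[OF _ rev, of "mat n n (\<lambda>(i,j). g i j)"] by simp
  qed
  have "det (mat n n (\<lambda>(i,j). f (n-1-i) (n-1-j))) = signof rev * det (mat n n (\<lambda>(i,j). f i (n-1-j)))"
    by (rule reverse_rows)
  also have "det (mat n n (\<lambda>(i,j). f i (n-1-j))) = det (mat n n (\<lambda>(i,j). f j (n-1-i)))"
    using det_mat_transpose[of n "\<lambda>i j. f j (n-1-i)"] by simp
  also have "\<dots> = signof rev * det (mat n n (\<lambda>(i,j). f j i))"
    by (rule reverse_rows)
  also have "det (mat n n (\<lambda>(i,j). f j i)) = det (mat n n (\<lambda>(i,j). f i j))"
    by (rule det_mat_transpose)
  finally show ?thesis
    by (simp flip: mult.assoc of_int_mult)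
qed

lemma det_toeplitz_unitriangular:
  fixes z :: "int \<Rightarrow> 'a::comm_ring_1"
  assumes "z 0 = 1" "\<And>i. i < 0 \<Longrightarrow> z i = 0"
  shows "det (mat n n (\<lambda>(i,j). z (int j - int i))) = 1"
  by (subst det_upper_triangular[of _ n]) (auto simp: upper_triangular_def assms prod_list_diag_prod)

lemma strict_mono_gap:
  fixes c :: "nat \<Rightarrow> nat"
  assumes "\<And>i j. i < j \<Longrightarrow> j < n \<Longrightarrow> c i < c j" "j \<le> i" "i < n"
  shows "c j + (i - j) \<le> c i"
  using assms(2,3)
proof (induction i)
  case (Suc i)
  then show ?case
    using assms(1)[of i "Suc i"] by (cases "j = Suc i") auto
qed simp

lemma strict_mono_self_map_eq:
  fixes c :: "nat \<Rightarrow> nat"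
  assumes "\<And>i j. i < j \<Longrightarrow> j < k \<Longrightarrow> c i < c j" "\<And>j. j < k \<Longrightarrow> c j < k" "j < k"
  shows "c j = j"
proof -
  have "c 0 + j \<le> c j" "c j + (k - 1 - j) \<le> c (k - 1)"
    using strict_mono_gap[of k c 0 j, OF assms(1)] strict_mono_gap[of k c j "k - 1", OF assms(1)]
      assms(3) by simp_all
  then show ?thesis
    using assms(2)[of "k - 1"] assms(3) by linarith
qed

lemma det_unit_rows:
  fixes F :: "nat \<Rightarrow> nat \<Rightarrow> 'a::comm_ring_1"
  assumes "\<And>i j. i < j \<Longrightarrow> j < n \<Longrightarrow> s i < s j" "\<And>i. i < n \<Longrightarrow> s i < n + k"
    and "\<And>i j. i < j \<Longrightarrow> j < k \<Longrightarrow> c i < c j" "\<And>j. j < k \<Longrightarrow> c j < n + k"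
    and "\<And>i j. i < n \<Longrightarrow> j < k \<Longrightarrow> s i \<noteq> c j"
  shows "det (mat (n+k) (n+k) (\<lambda>(i,j). if i < n then of_bool (j = s i) else F (i-n) j))
       = (-1)^(\<Sum>i<n. s i - i) * det (mat k k (\<lambda>(i,j). F i (c j)))"
  using assms
proof (induction n arbitrary: s c F)
  case 0
  have "c j = j" if "j < k" for j
    using strict_mono_self_map_eq[of k c j] 0 that by simp
  then have "mat (0+k) (0+k) (\<lambda>(i,j). if i < 0 then of_bool (j = s i) else F (i-0) j)
      = mat k k (\<lambda>(i,j). F i (c j))"
    by (intro eq_matI) auto
  then show ?case by simp
next
  case (Suc n)
  define A where "A = mat (Suc n+k) (Suc n+k) (\<lambda>(i,j). if i < Suc n then of_bool (j = s i) else F (i - Suc n) j)"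
  have s_gt: "s 0 < s (Suc i)" if "i < n" for i
    using Suc.prems(1)[of 0 "Suc i"] that by simp
  have "s 0 + n \<le> s n"
    using strict_mono_gap[of "Suc n" s 0 n, OF Suc.prems(1)] by simp
  then have s0_le: "s 0 \<le> k"
    using Suc.prems(2)[of n] by simp
  have "det A = (\<Sum>j<Suc n + k. A $$ (0,j) * cofactor A 0 j)"
    by (rule laplace_expansion_row) (simp_all add: A_def)
  also have "\<dots> = (\<Sum>j<Suc n + k. if j = s 0 then cofactor A 0 j else 0)"
    by (intro sum.cong) (auto simp: A_def)
  also have "\<dots> = cofactor A 0 (s 0)"
    using Suc.prems(2)[of 0] by simp
  finally have expand: "det A = (-1)^(s 0) * det (mat_delete A 0 (s 0))"
    by (simp add: cofactor_def)
  \<comment> \<open>deleting row \<open>0\<close> and column \<open>s 0\<close> shifts the column indices beyond \<open>s 0\<close> down by one\<close>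
  define s' where "s' i = s (Suc i) - 1" for i
  define c' where "c' j = (if c j < s 0 then c j else c j - 1)" for j
  define F' where "F' i j = F i (if j < s 0 then j else Suc j)" for i j
  have delete: "mat_delete A 0 (s 0) = mat (n+k) (n+k) (\<lambda>(i,j). if i < n then of_bool (j = s' i) else F' (i-n) j)"
    unfolding mat_delete_def A_def s'_def F'_def
    by (intro eq_matI) (auto, (drule s_gt, linarith)+)
  have IH: "det (mat (n+k) (n+k) (\<lambda>(i,j). if i < n then of_bool (j = s' i) else F' (i-n) j))
      = (-1)^(\<Sum>i<n. s' i - i) * det (mat k k (\<lambda>(i,j). F' i (c' j)))"
  proof (rule Suc.IH)
    show "s' i < s' j" if "i < j" "j < n" for i j
      using Suc.prems(1)[of "Suc i" "Suc j"] that s_gt[of i] by (simp add: s'_def)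
    show "s' i < n + k" if "i < n" for i
      using Suc.prems(2)[of "Suc i"] that s_gt[of i] by (simp add: s'_def)
    show "c' i < c' j" if "i < j" "j < k" for i j
      using Suc.prems(3)[of i j] Suc.prems(5)[of 0 i] Suc.prems(5)[of 0 j] that by (auto simp: c'_def)
    show "c' j < n + k" if "j < k" for j
      using Suc.prems(4)[of j] Suc.prems(5)[of 0 j] that s0_le by (auto simp: c'_def)
    show "s' i \<noteq> c' j" if "i < n" "j < k" for i j
      using Suc.prems(5)[of "Suc i" j] Suc.prems(5)[of 0 j] that s_gt[of i] by (auto simp: s'_def c'_def)
  qed
  have "(if c' j < s 0 then c' j else Suc (c' j)) = c j" if "j < k" for j
    using Suc.prems(5)[of 0 j] that by (auto simp: c'_def)
  then have minor: "mat k k (\<lambda>(i,j). F' i (c' j)) = mat k k (\<lambda>(i,j). F i (c j))"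
    by (intro eq_matI) (auto simp: F'_def)
  have sum: "(\<Sum>i<Suc n. s i - i) = s 0 + (\<Sum>i<n. s' i - i)"
    unfolding sum.lessThan_Suc_shift s'_def using s_gt by (simp add: algebra_simps)
  show ?case
    unfolding A_def[symmetric] expand delete IH minor sum by (simp add: power_add)
qed

section \<open>Toeplitz products\<close>

text \<open>\<open>toeplitz_prod x z u v\<close> is the \<open>(u, v)\<close> entry of \<open>T\<^sub>x T\<^sub>z\<^sup>T\<close>, where \<open>T\<^sub>x = (x (i - j))\<^sub>i\<^sub>j\<close> is the lower
  triangular Toeplitz matrix of a sequence vanishing at negative indices.\<close>

definition toeplitz_prod :: "(int \<Rightarrow> 'a::comm_ring_1) \<Rightarrow> (int \<Rightarrow> 'a) \<Rightarrow> nat \<Rightarrow> nat \<Rightarrow> 'a" where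
  "toeplitz_prod x z u v = (\<Sum>t\<le>min u v. x (int u - int t) * z (int v - int t))"

lemma toeplitz_prod_commute: "toeplitz_prod x z u v = toeplitz_prod z x v u"
  by (simp add: toeplitz_prod_def min.commute mult.commute)

lemma sum_lessThan_eq_toeplitz_prod:
  fixes x z :: "int \<Rightarrow> 'a::comm_ring_1"
  assumes "\<And>i. i < 0 \<Longrightarrow> x i = 0" "\<And>i. i < 0 \<Longrightarrow> z i = 0" "min u v < w"
  shows "(\<Sum>t<w. x (int u - int t) * z (int v - int t)) = toeplitz_prod x z u v"
proof -
  have "x (int u - int t) * z (int v - int t) = 0" if "\<not> t \<le> min u v" for t
    using that assms(1)[of "int u - int t"] assms(2)[of "int v - int t"] by auto
  then show ?thesis
    unfolding toeplitz_prod_def by (intro sum.mono_neutral_right) (use assms(3) in auto)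
qed

lemma sum_conv_inverse_series:
  fixes y z :: "int \<Rightarrow> 'a::comm_ring_1"
  assumes y: "\<And>i. i < 0 \<Longrightarrow> y i = 0" and z: "\<And>i. i < 0 \<Longrightarrow> z i = 0"
    and yz: "gen_fps y * gen_fps z = 1" and "u < w" "v < w"
  shows "(\<Sum>t<w. y (int t - int u) * z (int v - int t)) = of_bool (u = v)"
proof (cases "u \<le> v")
  case False
  have "y (int t - int u) * z (int v - int t) = 0" for t
    using False y[of "int t - int u"] z[of "int v - int t"] by (cases "t < u") auto
  then show ?thesis using False by simp
next
  case True
  have "(\<Sum>t<w. y (int t - int u) * z (int v - int t)) = (\<Sum>t\<in>{u..v}. y (int t - int u) * z (int v - int t))"
    by (rule sum.mono_neutral_right) (use assms in \<open>auto simp: not_le\<close>)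
  also have "\<dots> = (\<Sum>i=0..v-u. y (int i) * z (int (v-u-i)))"
    using True sum.shift_bounds_cl_nat_ivl[of "\<lambda>t. y (int t - int u) * z (int v - int t)" 0 u "v-u"]
    by (simp add: of_nat_diff algebra_simps)
  also have "\<dots> = fps_nth (gen_fps y * gen_fps z) (v - u)"
    by (simp add: fps_mult_nth gen_fps_def)
  finally show ?thesis
    using True yz by auto
qed

text \<open>The rows \<open>y (j - c i)\<close> become unit vectors after multiplication by \<open>(z (j - i))\<^sub>i\<^sub>j\<close>.\<close>

lemma det_toeplitz_rows_eq_minor:
  fixes x y z :: "int \<Rightarrow> 'a::comm_ring_1"
  assumes x: "\<And>i. i < 0 \<Longrightarrow> x i = 0"
    and y: "\<And>i. i < 0 \<Longrightarrow> y i = 0" and z: "z 0 = 1" "\<And>i. i < 0 \<Longrightarrow> z i = 0"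
    and yz: "gen_fps y * gen_fps z = 1"
    and c: "\<And>i j. i < j \<Longrightarrow> j < P \<Longrightarrow> c i < c j" "\<And>i. i < P \<Longrightarrow> c i < P + Q"
    and d: "\<And>i j. i < j \<Longrightarrow> j < Q \<Longrightarrow> d i < d j" "\<And>j. j < Q \<Longrightarrow> d j < P + Q"
    and cd: "\<And>i j. i < P \<Longrightarrow> j < Q \<Longrightarrow> c i \<noteq> d j"
  shows "det (mat (P+Q) (P+Q) (\<lambda>(i,j). if i < Q then x (int (r i) - int j) else y (int j - int (c (i-Q)))))
       = (-1)^(P*Q + (\<Sum>i<P. c i - i)) * det (mat Q Q (\<lambda>(i,j). toeplitz_prod x z (r i) (d j)))"
proof -
  define w where "w = P + Q"
  define G where "G = mat w w (\<lambda>(i,j). if i < Q then x (int (r i) - int j) else y (int j - int (c (i-Q))))"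
  define U where "U = mat w w (\<lambda>(i,j). z (int j - int i))"
  define H where "H = mat w w (\<lambda>(i,j). if i < Q then toeplitz_prod x z (r i) j else of_bool (j = c (i-Q)))"
  have "G * U = H"
  proof (rule eq_matI)
    fix i j assume "i < dim_row H" "j < dim_col H"
    then have ij: "i < w" "j < w" by (simp_all add: H_def)
    then have "(G * U) $$ (i,j) = (\<Sum>t<w. G $$ (i,t) * z (int j - int t))"
      by (simp add: G_def U_def scalar_prod_def atLeast0LessThan)
    also have "\<dots> = H $$ (i,j)"
    proof (cases "i < Q")
      case True
      have "(\<Sum>t<w. x (int (r i) - int t) * z (int j - int t)) = toeplitz_prod x z (r i) j"
        by (rule sum_lessThan_eq_toeplitz_prod) (use x z ij in auto)
      then show ?thesis
        using True ij by (simp add: G_def H_def)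
    next
      case False
      then have "c (i-Q) < w" using ij c(2)[of "i-Q"] by (simp add: w_def)
      then show ?thesis
        using False ij sum_conv_inverse_series[OF y z(2) yz, of "c (i-Q)" w j]
        by (simp add: G_def H_def)
    qed
    finally show "(G * U) $$ (i,j) = H $$ (i,j)" .
  qed (simp_all add: G_def U_def H_def)
  then have "det G = det H"
    using det_mult[of G w U] det_toeplitz_unitriangular[where z=z and n=w, OF z] by (simp add: G_def U_def)
  also have "det H = (-1)^(P*Q) * det (mat (P+Q) (P+Q) (\<lambda>(i,j). H $$ (if i < P then i + Q else i - P, j)))"
    by (rule det_swap_rows) (simp add: H_def w_def)
  also have "mat (P+Q) (P+Q) (\<lambda>(i,j). H $$ (if i < P then i + Q else i - P, j))
      = mat (P+Q) (P+Q) (\<lambda>(i,j). if i < P then of_bool (j = c i) else toeplitz_prod x z (r (i-P)) j)"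
    by (intro eq_matI) (auto simp: H_def w_def)
  also have "det (mat (P+Q) (P+Q) (\<lambda>(i,j). if i < P then of_bool (j = c i) else toeplitz_prod x z (r (i-P)) j))
      = (-1)^(\<Sum>i<P. c i - i) * det (mat Q Q (\<lambda>(i,j). toeplitz_prod x z (r i) (d j)))"
    by (rule det_unit_rows) (use c d cd in auto)
  finally show ?thesis
    by (simp add: G_def w_def power_add)
qed

section \<open>Partitions and their conjugates\<close>

text \<open>What Macdonald's complementarity lemma uses of a partition \<open>\<lambda>\<close> and its conjugate \<open>\<kappa>\<close>: by the
  last condition the numbers \<open>Q + i - \<lambda>\<^sub>i\<close> and \<open>\<kappa>\<^bsub>Q-1-j\<^esub> + j\<close> never coincide. The relation is
  symmetric, which spares us the identity \<open>\<nu>'' = \<nu>\<close>.\<close>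

definition dual_pair :: "nat list \<Rightarrow> nat list \<Rightarrow> bool" where
  "dual_pair lam \<kappa> \<longleftrightarrow>
     antimono (nth_default 0 lam) \<and> antimono (nth_default 0 \<kappa>) \<and>
     (\<forall>m\<in>set lam. m \<le> length \<kappa>) \<and> (\<forall>m\<in>set \<kappa>. m \<le> length lam) \<and>
     (\<forall>i j. nth_default 0 lam i + nth_default 0 \<kappa> j \<noteq> i + j + 1)"

lemma dual_pair_sym: "dual_pair lam \<kappa> \<Longrightarrow> dual_pair \<kappa> lam"
  unfolding dual_pair_def by (metis add.commute)

lemma nth_default_le:
  "(\<forall>m\<in>set xs. m \<le> K) \<Longrightarrow> nth_default 0 xs i \<le> (K::nat)"
  by (simp add: nth_default_def)

lemma length_conj_part: "length (conj_part lam) = (if lam = [] then 0 else Max (set lam))"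
  by (simp add: conj_part_def del: upt_Suc)

lemma le_length_conj_part: "m \<in> set lam \<Longrightarrow> m \<le> length (conj_part lam)"
  by (auto simp: length_conj_part)

lemma nth_default_conj_part:
  "nth_default 0 (conj_part lam) j = length (filter (\<lambda>m. Suc j \<le> m) lam)"
proof (cases "j < length (conj_part lam)")
  case True
  then show ?thesis
    by (simp add: nth_default_def conj_part_def del: upt_Suc)
next
  case False
  then have "filter (\<lambda>m. Suc j \<le> m) lam = []"
    using le_length_conj_part[of _ lam] by (force simp: filter_empty_conv)
  then show ?thesis
    using False by (simp add: nth_default_def)
qed

lemma antimono_nth_default_partition:
  "is_partition lam \<Longrightarrow> antimono (nth_default 0 lam)"
  unfolding is_partition_def
  by (rule antimonoI) (auto simp: nth_default_def sorted_wrt_iff_nth_less le_less)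

lemma antimono_nth_default_conj_part: "antimono (nth_default 0 (conj_part lam))"
proof (rule antimonoI)
  fix i j :: nat assume "i \<le> j"
  then show "nth_default 0 (conj_part lam) j \<le> nth_default 0 (conj_part lam) i"
    unfolding nth_default_conj_part by (induction lam) auto
qed

lemma partition_conj_part_complement:
  assumes "is_partition lam"
  shows "nth_default 0 lam i + nth_default 0 (conj_part lam) j \<noteq> i + j + 1"
proof -
  let ?ge = "{t. t < length lam \<and> Suc j \<le> lam ! t}"
  have count: "nth_default 0 (conj_part lam) j = card ?ge"
    by (simp add: nth_default_conj_part length_filter_conv_card)
  have dec: "nth_default 0 lam t' \<le> nth_default 0 lam t" if "t \<le> t'" for t t'
    using antimono_nth_default_partition[OF assms] that by (simp add: antimono_def)
  show ?thesis
  proof (cases "Suc j \<le> nth_default 0 lam i")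
    case True
    then have i: "i < length lam"
      by (auto simp: nth_default_def split: if_splits)
    have "{..i} \<subseteq> ?ge"
    proof
      fix t assume "t \<in> {..i}"
      then show "t \<in> ?ge"
        using True i dec[of t i] by (simp add: nth_default_def)
    qed
    then have "Suc i \<le> card ?ge"
      using card_mono[of ?ge "{..i}"] by simp
    then show ?thesis using True count by simp
  next
    case False
    have "?ge \<subseteq> {..<i}"
    proof
      fix t assume t: "t \<in> ?ge"
      show "t \<in> {..<i}"
      proof (rule ccontr)
        assume "t \<notin> {..<i}"
        then show False
          using t False dec[of i t] by (simp add: nth_default_def)
      qed
    qed
    then have "card ?ge \<le> i"
      using card_mono[of "{..<i}" ?ge] by simp
    then show ?thesis using False count by simp
  qed
qed

lemma dual_pair_conj_part:
  assumes "is_partition lam"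
  shows "dual_pair lam (conj_part lam)"
proof -
  have "\<forall>m\<in>set (conj_part lam). m \<le> length lam"
    by (auto simp: conj_part_def)
  then show ?thesis
    unfolding dual_pair_def using partition_conj_part_complement[OF assms]
    by (auto simp: assms antimono_nth_default_partition antimono_nth_default_conj_part le_length_conj_part)
qed

lemma sum_list_eq_sum_nth_default:
  "length xs \<le> L \<Longrightarrow> sum_list xs = (\<Sum>i<L. nth_default 0 xs i)"
  unfolding sum_list_sum_nth atLeast0LessThan
  by (rule sum.mono_neutral_cong_left) (auto simp: nth_default_def)

lemma sum_count_ge:
  "(\<forall>m\<in>set xs. m \<le> K) \<Longrightarrow> (\<Sum>j<K. length (filter (\<lambda>m. Suc j \<le> m) xs)) = sum_list xs"
proof (induction xs)
  case (Cons m xs)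
  have "(\<Sum>j<K. length (filter (\<lambda>m. Suc j \<le> m) (m # xs)))
      = (\<Sum>j<K. (if j < m then 1 else 0) + length (filter (\<lambda>m. Suc j \<le> m) xs))"
    by (intro sum.cong) auto
  also have "\<dots> = card {j. j < K \<and> j < m} + (\<Sum>j<K. length (filter (\<lambda>m. Suc j \<le> m) xs))"
    by (simp add: sum.distrib sum.If_cases Int_def)
  also have "{j. j < K \<and> j < m} = {..<m}"
    using Cons.prems by auto
  finally show ?case using Cons by simp
qed simp

lemma sum_list_conj_part: "sum_list (conj_part lam) = sum_list lam"
proof -
  have "sum_list (conj_part lam) = (\<Sum>j<length (conj_part lam). nth_default 0 (conj_part lam) j)"
    by (rule sum_list_eq_sum_nth_default) simp
  also have "\<dots> = sum_list lam"
    unfolding nth_default_conj_part by (rule sum_count_ge) (simp add: le_length_conj_part)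
  finally show ?thesis .
qed

section \<open>Jacobi--Trudi matrices\<close>

lemma det_jt_matrix_append_zero:
  fixes x y :: "int \<Rightarrow> 'a::comm_ring_1"
  assumes "x 0 = 1" "\<And>i. i < 0 \<Longrightarrow> x i = 0"
  shows "det (jt_matrix x y (\<nu> @ [0]) \<mu>) = det (jt_matrix x y \<nu> \<mu>)"
proof -
  define n where "n = length \<mu> + length \<nu>"
  define A where "A = jt_matrix x y (\<nu> @ [0]) \<mu>"
  have A: "A \<in> carrier_mat (Suc n) (Suc n)"
    by (simp add: A_def n_def jt_matrix_def Let_def part_len_def)
  have "det A = (\<Sum>j<Suc n. A $$ (0,j) * cofactor A 0 j)"
    by (rule laplace_expansion_row[OF A]) simp
  also have "\<dots> = (\<Sum>j<Suc n. if j = 0 then cofactor A 0 j else 0)"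
    by (intro sum.cong) (use assms in \<open>auto simp: A_def n_def jt_matrix_def Let_def part_len_def nth_append\<close>)
  also have "\<dots> = det (mat_delete A 0 0)"
    by (simp add: cofactor_def)
  also have "mat_delete A 0 0 = jt_matrix x y \<nu> \<mu>"
    unfolding A_def jt_matrix_def Let_def part_len_def mat_delete_def
    by (intro eq_matI) (auto simp: nth_append algebra_simps)
  finally show ?thesis
    by (simp add: A_def)
qed

lemma det_jt_matrix_append_zeros:
  fixes x y :: "int \<Rightarrow> 'a::comm_ring_1"
  assumes "x 0 = 1" "\<And>i. i < 0 \<Longrightarrow> x i = 0"
  shows "det (jt_matrix x y (\<nu> @ replicate m 0) \<mu>) = det (jt_matrix x y \<nu> \<mu>)"
proof (induction m)
  case (Suc m)
  then show ?case
    using det_jt_matrix_append_zero[where x=x and y=y and \<nu>="\<nu> @ replicate m 0", OF assms]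
    by (simp add: replicate_append_same[symmetric])
qed simp

text \<open>Reversing rows and columns exchanges the two blocks of rows.\<close>

lemma det_jt_matrix_swap:
  fixes x y :: "int \<Rightarrow> 'a::comm_ring_1"
  shows "det (jt_matrix x y \<nu> \<mu>) = det (jt_matrix y x \<mu> \<nu>)"
proof -
  define n where "n = length \<mu> + length \<nu>"
  define A where "A = jt_matrix x y \<nu> \<mu>"
  have "jt_matrix y x \<mu> \<nu> = mat n n (\<lambda>(i,j). A $$ (n-1-i, n-1-j))"
    unfolding A_def jt_matrix_def Let_def part_len_def n_def
    by (intro eq_matI) (auto simp: of_nat_diff algebra_simps)
  moreover have "A = mat n n (\<lambda>(i,j). A $$ (i,j))"
    by (intro eq_matI) (simp_all add: A_def jt_matrix_def Let_def part_len_def n_def)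
  ultimately show ?thesis
    using det_mat_reverse[of n "\<lambda>i j. A $$ (i,j)"] by (simp add: A_def)
qed

lemma jt_matrix_padded_eq:
  fixes x y :: "int \<Rightarrow> 'a::comm_ring_1"
  assumes "\<forall>m\<in>set \<mu>. m \<le> Q" "length \<nu> \<le> Q"
  shows "jt_matrix x y (\<nu> @ replicate (Q - length \<nu>) 0) \<mu> = mat (length \<mu> + Q) (length \<mu> + Q) (\<lambda>(i,j).
           if i < Q then x (int (nth_default 0 \<nu> (Q-1-i) + i) - int j)
           else y (int j - int (Q + (i-Q) - nth_default 0 \<mu> (i-Q))))"
    (is "_ = ?M")
proof (rule eq_matI)
  fix i j assume ij: "i < dim_row ?M" "j < dim_col ?M"
  have "nth_default 0 \<mu> (i - Q) \<le> i" if "\<not> i < Q"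
    using nth_default_le[OF assms(1), of "i - Q"] that by simp
  then show "jt_matrix x y (\<nu> @ replicate (Q - length \<nu>) 0) \<mu> $$ (i,j) = ?M $$ (i,j)"
    using ij assms(2)
    by (auto simp: jt_matrix_def Let_def part_len_def nth_default_def nth_append of_nat_diff algebra_simps)
qed (use assms(2) in \<open>simp_all add: jt_matrix_def Let_def part_len_def\<close>)

lemma minus_one_power_sum_complement:
  assumes "\<forall>m\<in>set \<mu>. m \<le> Q"
  shows "(-1::'a::comm_ring_1)^(length \<mu> * Q + (\<Sum>i<length \<mu>. Q + i - nth_default 0 \<mu> i - i))
       = (-1)^sum_list \<mu>"
proof -
  define E where "E = length \<mu> * Q + (\<Sum>i<length \<mu>. Q + i - nth_default 0 \<mu> i - i)"
  have "Q + i - nth_default 0 \<mu> i - i + nth_default 0 \<mu> i = Q" for i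
    using nth_default_le[OF assms, of i] by simp
  then have "E + sum_list \<mu> = 2 * (length \<mu> * Q)"
    using sum_list_eq_sum_nth_default[of \<mu> "length \<mu>"] by (simp add: E_def flip: sum.distrib)
  then have "even (E + sum_list \<mu>)"
    by simp
  then show ?thesis
    unfolding E_def[symmetric] by (auto simp: minus_one_power_iff)
qed

lemma det_jt_matrix_eq_minor:
  fixes x y z :: "int \<Rightarrow> 'a::comm_ring_1"
  assumes x: "x 0 = 1" "\<And>i. i < 0 \<Longrightarrow> x i = 0"
    and y: "\<And>i. i < 0 \<Longrightarrow> y i = 0" and z: "z 0 = 1" "\<And>i. i < 0 \<Longrightarrow> z i = 0"
    and yz: "gen_fps y * gen_fps z = 1"
    and dual: "dual_pair \<mu> \<kappa>"
    and Q: "Q = length \<nu> + length \<kappa>"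
  shows "det (jt_matrix x y \<nu> \<mu>) = (-1)^sum_list \<mu> * det (mat Q Q (\<lambda>(i,j).
           toeplitz_prod x z (nth_default 0 \<nu> (Q-1-i) + i) (nth_default 0 \<kappa> (Q-1-j) + j)))"
proof -
  define P where "P = length \<mu>"
  define c where "c i = Q + i - nth_default 0 \<mu> i" for i
  define d where "d j = nth_default 0 \<kappa> (Q-1-j) + j" for j
  have \<mu>_dec: "nth_default 0 \<mu> j \<le> nth_default 0 \<mu> i" if "i \<le> j" for i j
    using dual that by (simp add: dual_pair_def antimono_def)
  have \<kappa>_dec: "nth_default 0 \<kappa> j \<le> nth_default 0 \<kappa> i" if "i \<le> j" for i j
    using dual that by (simp add: dual_pair_def antimono_def)
  have \<mu>_parts: "\<forall>m\<in>set \<mu>. m \<le> Q"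
    using dual unfolding dual_pair_def Q by (meson trans_le_add2)
  have \<kappa>_parts: "\<forall>m\<in>set \<kappa>. m \<le> P"
    using dual by (simp add: dual_pair_def P_def)
  have "det (jt_matrix x y \<nu> \<mu>) = det (jt_matrix x y (\<nu> @ replicate (Q - length \<nu>) 0) \<mu>)"
    by (rule det_jt_matrix_append_zeros[where x=x and y=y, OF x, symmetric])
  also have "jt_matrix x y (\<nu> @ replicate (Q - length \<nu>) 0) \<mu> = mat (P+Q) (P+Q) (\<lambda>(i,j).
      if i < Q then x (int (nth_default 0 \<nu> (Q-1-i) + i) - int j) else y (int j - int (c (i-Q))))"
    unfolding P_def c_def by (rule jt_matrix_padded_eq) (use \<mu>_parts in \<open>simp_all add: Q\<close>)
  also have "det \<dots> = (-1)^(P*Q + (\<Sum>i<P. c i - i)) * det (mat Q Q (\<lambda>(i,j).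
      toeplitz_prod x z (nth_default 0 \<nu> (Q-1-i) + i) (d j)))"
  proof (rule det_toeplitz_rows_eq_minor[OF x(2) y z yz])
    show "c i < c j" if "i < j" "j < P" for i j
      using that \<mu>_dec[of i j] nth_default_le[OF \<mu>_parts, of i] by (simp add: c_def)
    show "d i < d j" if "i < j" "j < Q" for i j
      using that \<kappa>_dec[of "Q-1-j" "Q-1-i"] by (simp add: d_def add_le_less_mono)
    show "c i \<noteq> d j" if "i < P" "j < Q" for i j
    proof -
      have "nth_default 0 \<mu> i + nth_default 0 \<kappa> (Q-1-j) \<noteq> i + (Q-1-j) + 1"
        using dual by (simp add: dual_pair_def)
      then show ?thesis
        using that nth_default_le[OF \<mu>_parts, of i] by (simp add: c_def d_def)
    qed
    show "c i < P + Q" if "i < P" for i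
      using that by (simp add: c_def)
    show "d j < P + Q" if "j < Q" for j
      using that nth_default_le[OF \<kappa>_parts, of "Q-1-j"] by (simp add: d_def)
  qed
  also have "(-1::'a)^(P*Q + (\<Sum>i<P. c i - i)) = (-1)^sum_list \<mu>"
    unfolding P_def c_def by (rule minus_one_power_sum_complement[OF \<mu>_parts])
  finally show ?thesis
    by (simp add: d_def)
qed

theorem mainTheorem19:
  fixes a ast b bst :: "int \<Rightarrow> 'a::comm_ring_1"
    and \<nu> \<mu> :: "nat list"
  assumes "a 0 = 1" "ast 0 = 1" "b 0 = 1" "bst 0 = 1"
    and "\<And>i. i < 0 \<Longrightarrow> a i = 0" "\<And>i. i < 0 \<Longrightarrow> ast i = 0"
    and "\<And>i. i < 0 \<Longrightarrow> b i = 0" "\<And>i. i < 0 \<Longrightarrow> bst i = 0"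
    and "gen_fps a * gen_fps b = 1"
    and "gen_fps ast * gen_fps bst = 1"
    and "is_partition \<nu>" "is_partition \<mu>"
  shows "det (jt_matrix ast a \<nu> \<mu>)
         = (-1) ^ (part_size \<nu> + part_size \<mu>) * det (jt_matrix bst b (conj_part \<nu>) (conj_part \<mu>))"
proof -
  let ?Q = "length \<nu> + length (conj_part \<mu>)"
  let ?r = "\<lambda>i. nth_default 0 \<nu> (?Q-1-i) + i" and ?d = "\<lambda>j. nth_default 0 (conj_part \<mu>) (?Q-1-j) + j"
  let ?D = "det (mat ?Q ?Q (\<lambda>(i,j). toeplitz_prod ast b (?r i) (?d j)))"
  have bst_ast: "gen_fps bst * gen_fps ast = 1"
    using assms(10) by (simp add: mult.commute)
  have A: "det (jt_matrix ast a \<nu> \<mu>) = (-1)^sum_list \<mu> * ?D"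
    by (rule det_jt_matrix_eq_minor) (simp_all add: assms dual_pair_conj_part)
  have "det (jt_matrix bst b (conj_part \<nu>) (conj_part \<mu>)) = det (jt_matrix b bst (conj_part \<mu>) (conj_part \<nu>))"
    by (rule det_jt_matrix_swap)
  also have "\<dots> = (-1)^sum_list (conj_part \<nu>) * det (mat ?Q ?Q (\<lambda>(i,j). toeplitz_prod b ast (?d i) (?r j)))"
    by (rule det_jt_matrix_eq_minor) (simp_all add: assms bst_ast dual_pair_sym dual_pair_conj_part)
  also have "det (mat ?Q ?Q (\<lambda>(i,j). toeplitz_prod b ast (?d i) (?r j))) = ?D"
    unfolding toeplitz_prod_commute[of b ast] by (rule det_mat_transpose)
  finally have B: "det (jt_matrix bst b (conj_part \<nu>) (conj_part \<mu>)) = (-1)^sum_list \<nu> * ?D"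
    by (simp only: sum_list_conj_part)
  have "(-1::'a)^(part_size \<nu> + part_size \<mu>) * (-1)^sum_list \<nu> = (-1)^sum_list \<mu>"
    by (simp add: part_size_def power_add minus_one_power_iff)
  then show ?thesis
    unfolding A B by (simp only: mult.assoc[symmetric])
qed

end
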